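(* The following identities hold: \begin{align*}\sum_{k=1}^\infty\frac{77k^2-53k+10}{k(3k-1)(3k-2)(-2)^k\binom{4k}k}&=-3\log2, \\\sum_{k=1}^\infty\frac{415k^2-343k+62}{k(3k-1)(3k-2)(-8)^k\binom{4k}k}&=-3\log2, \\\sum_{k=1}^\infty\frac{187k^2-131k+22}{k(3k-1)(3k-2)(-24)^k\binom{4k}k}&=\log\frac23, \\\sum_{k=1}^\infty\frac{1261k^2-989k+170}{k(3k-1)(3k-2)(-192)^k\binom{4k}k}&=\log\frac34. \end{align*} *)

theory Defs
  imports "HOL-Analysis.Analysis"
begin

end

theory Submission
  imports Defs
begin

(* Each summand is an integral: with k = n + 1 and R(t) = a t (1-t)^2 + b t^2 (1-t) + c t^3,
   the Beta integral gives
     int_0^1 t^n (1-t)^(3n) R(t) dt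
       = (a (3k-1)(3k-2) + b (k+1)(3k-2) + c (k+1)(k+2)) / (3k (3k-1)(3k-2) binom(4k,k)).
   Summing the geometric series in -t(1-t)^3/s under the integral turns each series into
   int_0^1 -R(t) / (s + t(1-t)^3) dt. For s = 2, 8, 24, 192 the quartic s + t(1-t)^3 splits
   over the rationals into a linear and a cubic factor, and a, b, c are chosen so that the
   integrand is a combination of their logarithmic derivatives. *)

lemma beta_integral_nat:
  "((\<lambda>t::real. t ^ m * (1 - t) ^ j) has_integral fact m * fact j / fact (m + j + 1)) {0..1}"
proof -
  have "Beta (real m + 1) (real j + 1) = fact m * fact j / fact (m + j + 1)"
    using Gamma_fact[where 'a=real, of m] Gamma_fact[where 'a=real, of j]
      Gamma_fact[where 'a=real, of "m + j + 1"]
    by (simp add: Beta_def add_ac)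
  moreover have "((\<lambda>t::real. t powr (real m + 1 - 1) * (1 - t) powr (real j + 1 - 1))
      has_integral Beta (real m + 1) (real j + 1)) {0<..<1}"
    using has_integral_Beta_real[of "real m + 1" "real j + 1"]
    by (simp add: has_integral_Icc_iff_Ioo)
  ultimately have "((\<lambda>t::real. t powr real m * (1 - t) powr real j)
      has_integral fact m * fact j / fact (m + j + 1)) {0<..<1}"
    by simp
  moreover have "t powr real m * (1 - t) powr real j = t ^ m * (1 - t) ^ j" if "t \<in> {0<..<1}" for t :: real
    using that by (simp add: powr_realpow)
  ultimately have "((\<lambda>t::real. t ^ m * (1 - t) ^ j) has_integral fact m * fact j / fact (m + j + 1)) {0<..<1}"
    using has_integral_cong by (metis (no_types, lifting))
  then show ?thesis
    by (simp add: has_integral_Icc_iff_Ioo)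
qed

definition cubic_weight :: "real \<Rightarrow> real \<Rightarrow> real \<Rightarrow> real \<Rightarrow> real" where
  "cubic_weight a b c t = a * t * (1 - t) ^ 2 + b * t ^ 2 * (1 - t) + c * t ^ 3"

lemma has_integral_cubic_weight:
  fixes a b c :: real and n :: nat
  defines "k \<equiv> real (Suc n)"
  shows "((\<lambda>t. t ^ n * (1 - t) ^ (3 * n) * cubic_weight a b c t) has_integral
      (a * (3 * k - 1) * (3 * k - 2) + b * (k + 1) * (3 * k - 2) + c * (k + 1) * (k + 2))
        / (3 * k * (3 * k - 1) * (3 * k - 2) * real ((4 * Suc n) choose Suc n))) {0..1}"
proof -
  define C where "C = real ((4 * Suc n) choose Suc n)"
  define p where "p = (fact (n + 1) :: real)"
  define q where "q = (fact (3 * n) :: real)"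
  have facts: "(fact (n + 2) :: real) = (real n + 2) * p"
    "(fact (n + 3) :: real) = (real n + 3) * (real n + 2) * p"
    "(fact (3 * n + 1) :: real) = (3 * real n + 1) * q"
    "(fact (3 * n + 2) :: real) = (3 * real n + 2) * (3 * real n + 1) * q"
    "(fact (3 * n + 3) :: real) = (3 * real n + 3) * (3 * real n + 2) * (3 * real n + 1) * q"
    unfolding p_def q_def by (simp_all add: numeral_eq_Suc fact_Suc algebra_simps)
  have "fact (Suc n) * fact (3 * n + 3) * ((4 * Suc n) choose Suc n) = (fact (4 * n + 4) :: nat)"
    using binomial_fact_lemma[of "Suc n" "4 * Suc n"] by (simp add: algebra_simps)
  then have "real (fact (Suc n) * fact (3 * n + 3) * ((4 * Suc n) choose Suc n)) = real (fact (4 * n + 4))"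
    by (rule arg_cong)
  then have binom: "fact (4 * n + 4) = C * p * ((3 * real n + 3) * (3 * real n + 2) * (3 * real n + 1) * q)"
    unfolding C_def p_def facts(5)[symmetric] by (simp only: of_nat_mult of_nat_fact Suc_eq_plus1 ac_simps)
  have indices: "n + 1 + (3 * n + 2) + 1 = 4 * n + 4" "n + 2 + (3 * n + 1) + 1 = 4 * n + 4"
    "n + 3 + 3 * n + 1 = 4 * n + 4"
    by simp_all
  have "t ^ n * (1 - t) ^ (3 * n) * cubic_weight a b c t =
      a * (t ^ (n + 1) * (1 - t) ^ (3 * n + 2)) + b * (t ^ (n + 2) * (1 - t) ^ (3 * n + 1))
        + c * (t ^ (n + 3) * (1 - t) ^ (3 * n))" for t :: real
    by (simp add: cubic_weight_def power_add algebra_simps power2_eq_square power3_eq_cube)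
  then have "((\<lambda>t. t ^ n * (1 - t) ^ (3 * n) * cubic_weight a b c t) has_integral
      a * (fact (n + 1) * fact (3 * n + 2) / fact (4 * n + 4))
        + b * (fact (n + 2) * fact (3 * n + 1) / fact (4 * n + 4))
        + c * (fact (n + 3) * fact (3 * n) / fact (4 * n + 4))) {0..1}"
    using beta_integral_nat[of "n + 1" "3 * n + 2", unfolded indices(1)]
      beta_integral_nat[of "n + 2" "3 * n + 1", unfolded indices(2)]
      beta_integral_nat[of "n + 3" "3 * n", unfolded indices(3)]
    by (simp only:) (intro has_integral_add has_integral_mult_right)
  moreover have "C > 0" "p > 0" "q > 0"
    unfolding C_def p_def q_def by simp_all
  then have "a * (fact (n + 1) * fact (3 * n + 2) / fact (4 * n + 4))
        + b * (fact (n + 2) * fact (3 * n + 1) / fact (4 * n + 4))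
        + c * (fact (n + 3) * fact (3 * n) / fact (4 * n + 4))
      = (a * (3 * k - 1) * (3 * k - 2) + b * (k + 1) * (3 * k - 2) + c * (k + 1) * (k + 2))
        / (3 * k * (3 * k - 1) * (3 * k - 2) * C)"
    unfolding binom facts p_def[symmetric] q_def[symmetric] k_def
    by (simp add: divide_simps) algebra
  ultimately show ?thesis
    unfolding C_def by simp
qed

lemma sums_integral_geometric:
  fixes h q :: "real \<Rightarrow> real"
  assumes h: "continuous_on {a..b} h" and q: "continuous_on {a..b} q"
    and q_bound: "\<And>t. t \<in> {a..b} \<Longrightarrow> \<bar>q t\<bar> \<le> r" and "r < 1"
  shows "(\<lambda>n. integral {a..b} (\<lambda>t. h t * q t ^ n)) sums integral {a..b} (\<lambda>t. h t / (1 - q t))"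
proof -
  have "(\<lambda>N. integral {a..b} (\<lambda>t. \<Sum>n<N. h t * q t ^ n)) \<longlonglongrightarrow> integral {a..b} (\<lambda>t. h t / (1 - q t))"
  proof (rule dominated_convergence(2))
    show "(\<lambda>t. \<Sum>n<N. h t * q t ^ n) integrable_on {a..b}" for N
      by (intro integrable_continuous_interval continuous_intros h q)
    show "(\<lambda>t. \<bar>h t\<bar> / (1 - r)) integrable_on {a..b}"
      using \<open>r < 1\<close> by (intro integrable_continuous_interval continuous_intros h) auto
  next
    fix N t
    assume t: "t \<in> {a..b}"
    then have r: "0 \<le> r" using q_bound[OF t] by linarith
    have "\<bar>\<Sum>n<N. h t * q t ^ n\<bar> \<le> (\<Sum>n<N. \<bar>h t\<bar> * r ^ n)"
      using q_bound[OF t]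
      by (intro sum_abs[THEN order_trans] sum_mono)
        (auto simp: abs_mult power_abs intro!: mult_left_mono power_mono)
    also have "\<dots> = \<bar>h t\<bar> * ((1 - r ^ N) / (1 - r))"
      using \<open>r < 1\<close> by (simp add: sum_distrib_left[symmetric] sum_gp_strict)
    also have "\<dots> \<le> \<bar>h t\<bar> * (1 / (1 - r))"
      using \<open>r < 1\<close> r by (intro mult_left_mono divide_right_mono) auto
    finally show "norm (\<Sum>n<N. h t * q t ^ n) \<le> \<bar>h t\<bar> / (1 - r)"
      by simp
  next
    fix t
    assume t: "t \<in> {a..b}"
    then have "norm (q t) < 1"
      using q_bound[OF t] \<open>r < 1\<close> by simp
    then have "(\<lambda>n. h t * q t ^ n) sums (h t * (1 / (1 - q t)))"
      by (intro sums_mult geometric_sums)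
    then show "(\<lambda>N. \<Sum>n<N. h t * q t ^ n) \<longlonglongrightarrow> h t / (1 - q t)"
      by (simp add: sums_def)
  qed
  moreover have "integral {a..b} (\<lambda>t. \<Sum>n<N. h t * q t ^ n) = (\<Sum>n<N. integral {a..b} (\<lambda>t. h t * q t ^ n))" for N
    by (intro integral_sum integrable_continuous_interval continuous_intros h q) simp
  ultimately show ?thesis
    by (simp add: sums_def)
qed

lemma sums_cubic_weight_series:
  fixes s a b c :: real and P :: "nat \<Rightarrow> real"
  assumes "s > 1"
    and P: "\<And>n. 3 * P (Suc n) = a * (3 * real (Suc n) - 1) * (3 * real (Suc n) - 2)
      + b * (real (Suc n) + 1) * (3 * real (Suc n) - 2) + c * (real (Suc n) + 1) * (real (Suc n) + 2)"
  shows "(\<lambda>n. let k = Suc n in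
      P k / (real k * (3 * real k - 1) * (3 * real k - 2) * (-s) ^ k * real ((4 * k) choose k)))
    sums integral {0..1} (\<lambda>t. - cubic_weight a b c t / (s + t * (1 - t) ^ 3))"
proof -
  let ?h = "\<lambda>t. - 1 / s * cubic_weight a b c t" and ?q = "\<lambda>t. - 1 / s * (t * (1 - t) ^ 3)"
  have geometric: "(\<lambda>n. integral {0..1} (\<lambda>t. ?h t * ?q t ^ n)) sums integral {0..1} (\<lambda>t. ?h t / (1 - ?q t))"
  proof (rule sums_integral_geometric[where r = "1 / s"])
    show "continuous_on {0..1} ?h" "continuous_on {0..1} ?q"
      using \<open>s > 1\<close> by (auto simp: cubic_weight_def intro!: continuous_intros)
    show "1 / s < 1"
      using \<open>s > 1\<close> by simp
    fix t :: real
    assume "t \<in> {0..1}"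
    then have "\<bar>t * (1 - t) ^ 3\<bar> \<le> 1"
      by (auto simp: abs_mult intro!: mult_le_one power_le_one)
    then show "\<bar>?q t\<bar> \<le> 1 / s"
      using \<open>s > 1\<close> by (simp only: abs_mult) (simp add: divide_right_mono)
  qed
  have term_integrals: "integral {0..1} (\<lambda>t. ?h t * ?q t ^ n) = (let k = Suc n in
      P k / (real k * (3 * real k - 1) * (3 * real k - 2) * (-s) ^ k * real ((4 * k) choose k)))" for n
  proof -
    have "(\<lambda>t. ?h t * ?q t ^ n) = (\<lambda>t. (- 1 / s) ^ Suc n * (t ^ n * (1 - t) ^ (3 * n) * cubic_weight a b c t))"
      unfolding power_mult_distrib power_mult power_Suc by (simp only: mult_ac)
    then have "integral {0..1} (\<lambda>t. ?h t * ?q t ^ n) = 1 / (-s) ^ Suc n * (3 * P (Suc n)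
        / (3 * real (Suc n) * (3 * real (Suc n) - 1) * (3 * real (Suc n) - 2) * real ((4 * Suc n) choose Suc n)))"
      using has_integral_cubic_weight[of n a b c, THEN has_integral_mult_right, THEN integral_unique,
          of "(- 1 / s) ^ Suc n"]
      unfolding P[symmetric] power_one_over[symmetric] by simp
    moreover have "real ((4 * Suc n) choose Suc n) > 0" "(-s) ^ Suc n \<noteq> 0"
      using \<open>s > 1\<close> by simp_all
    ultimately show ?thesis
      unfolding Let_def by (simp add: divide_simps) (simp add: algebra_simps)
  qed
  have limit_integrand: "?h t / (1 - ?q t) = - cubic_weight a b c t / (s + t * (1 - t) ^ 3)" for t
    using \<open>s > 1\<close> by (cases "s + t * (1 - t) ^ 3 = 0") (simp_all add: field_simps)
  show ?thesis
    using geometric by (simp only: term_integrals limit_integrand)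
qed

lemma has_integral_ln_combination:
  fixes A A' B B' :: "real \<Rightarrow> real"
  assumes "a \<le> b"
    and pos: "\<And>t. t \<in> {a..b} \<Longrightarrow> A t > 0" "\<And>t. t \<in> {a..b} \<Longrightarrow> B t > 0"
    and A: "\<And>t. (A has_real_derivative A' t) (at t)"
    and B: "\<And>t. (B has_real_derivative B' t) (at t)"
  shows "((\<lambda>t. \<alpha> * A' t / A t + \<beta> * B' t / B t) has_integral
      \<alpha> * ln (A b / A a) + \<beta> * ln (B b / B a)) {a..b}"
proof -
  have "((\<lambda>t. \<alpha> * ln (A t) + \<beta> * ln (B t)) has_vector_derivative \<alpha> * A' t / A t + \<beta> * B' t / B t)
      (at t within {a..b})" if "t \<in> {a..b}" for t
  proof -
    have "((\<lambda>t. \<alpha> * ln (A t) + \<beta> * ln (B t)) has_real_derivative \<alpha> * A' t / A t + \<beta> * B' t / B t) (at t)"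
      using pos[OF that] A[of t] B[of t] by (auto intro!: derivative_eq_intros simp: field_simps)
    then show ?thesis
      by (simp add: has_real_derivative_iff_has_vector_derivative has_vector_derivative_at_within)
  qed
  then have "((\<lambda>t. \<alpha> * A' t / A t + \<beta> * B' t / B t) has_integral
      (\<alpha> * ln (A b) + \<beta> * ln (B b)) - (\<alpha> * ln (A a) + \<beta> * ln (B a))) {a..b}"
    using \<open>a \<le> b\<close> by (intro fundamental_theorem_of_calculus) auto
  moreover have "A a > 0" "A b > 0" "B a > 0" "B b > 0"
    using pos \<open>a \<le> b\<close> by auto
  ultimately show ?thesis
    by (simp add: ln_div algebra_simps)
qed

lemma sums_ln_closed_form:
  fixes s a b c L :: real and P :: "nat \<Rightarrow> real" and A A' B B' :: "real \<Rightarrow> real"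
  assumes "s > 1"
    and P: "\<And>n. 3 * P (Suc n) = a * (3 * real (Suc n) - 1) * (3 * real (Suc n) - 2)
      + b * (real (Suc n) + 1) * (3 * real (Suc n) - 2) + c * (real (Suc n) + 1) * (real (Suc n) + 2)"
    and factor: "\<And>t. s + t * (1 - t) ^ 3 = A t * B t"
    and numerator: "\<And>t. - cubic_weight a b c t = \<alpha> * A' t * B t + \<beta> * A t * B' t"
    and A_pos: "\<And>t. t \<in> {0..1} \<Longrightarrow> A t > 0"
    and A: "\<And>t. (A has_real_derivative A' t) (at t)"
    and B: "\<And>t. (B has_real_derivative B' t) (at t)"
    and L: "L = \<alpha> * ln (A 1 / A 0) + \<beta> * ln (B 1 / B 0)"
  shows "(\<lambda>n. let k = Suc n in
      P k / (real k * (3 * real k - 1) * (3 * real k - 2) * (-s) ^ k * real ((4 * k) choose k))) sums L"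
proof -
  have B_pos: "B t > 0" if "t \<in> {0..1}" for t
  proof -
    have "A t * B t > 0"
      using that \<open>s > 1\<close> by (simp flip: factor add: add_pos_nonneg)
    then show ?thesis
      using A_pos[OF that] by (simp add: zero_less_mult_iff)
  qed
  have "integral {0..1} (\<lambda>t. - cubic_weight a b c t / (s + t * (1 - t) ^ 3))
      = integral {0..1} (\<lambda>t. \<alpha> * A' t / A t + \<beta> * B' t / B t)"
  proof (rule integral_cong)
    fix t :: real
    assume "t \<in> {0..1}"
    then have "A t \<noteq> 0" "B t \<noteq> 0"
      using A_pos B_pos by (simp_all add: less_imp_neq[symmetric])
    then show "- cubic_weight a b c t / (s + t * (1 - t) ^ 3) = \<alpha> * A' t / A t + \<beta> * B' t / B t"
      unfolding factor numerator by (simp add: field_simps)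
  qed
  also have "\<dots> = L"
    unfolding L by (rule integral_unique, rule has_integral_ln_combination) (use A_pos B_pos A B in auto)
  finally show ?thesis
    using sums_cubic_weight_series[OF \<open>s > 1\<close> P] by simp
qed

theorem theorem1p2:
  shows "((\<lambda>n. let k = Suc n in
            (77 * real k ^ 2 - 53 * real k + 10) /
            (real k * (3 * real k - 1) * (3 * real k - 2) * (-2) ^ k * real ((4 * k) choose k)))
          sums (- 3 * ln 2)) \<and>
        ((\<lambda>n. let k = Suc n in
            (415 * real k ^ 2 - 343 * real k + 62) /
            (real k * (3 * real k - 1) * (3 * real k - 2) * (-8) ^ k * real ((4 * k) choose k)))
          sums (- 3 * ln 2)) \<and>
        ((\<lambda>n. let k = Suc n in
            (187 * real k ^ 2 - 131 * real k + 22) /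
            (real k * (3 * real k - 1) * (3 * real k - 2) * (-24) ^ k * real ((4 * k) choose k)))
          sums (ln (2 / 3))) \<and>
        ((\<lambda>n. let k = Suc n in
            (1261 * real k ^ 2 - 989 * real k + 170) /
            (real k * (3 * real k - 1) * (3 * real k - 2) * (-192) ^ k * real ((4 * k) choose k)))
          sums (ln (3 / 4)))"
  by (intro conjI
      sums_ln_closed_form[where s = 2 and a = 21 and b = 12 and c = 6
        and \<alpha> = 6 and A = "\<lambda>t. 2 - t" and A' = "\<lambda>_. - 1"
        and \<beta> = 3 and B = "\<lambda>t. t ^ 3 - t ^ 2 + t + 1" and B' = "\<lambda>t. 3 * t ^ 2 - 2 * t + 1"]
      sums_ln_closed_form[where s = 8 and a = 123 and b = 42 and c = 12
        and \<alpha> = 21 and A = "\<lambda>t. t + 1" and A' = "\<lambda>_. 1"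
        and \<beta> = 24 and B = "\<lambda>t. 8 - 7 * t + 4 * t ^ 2 - t ^ 3" and B' = "\<lambda>t. - 7 + 8 * t - 3 * t ^ 2"]
      sums_ln_closed_form[where s = 24 and a = 51 and b = 30 and c = 12
        and \<alpha> = 9 and A = "\<lambda>t. 3 - t" and A' = "\<lambda>_. - 1"
        and \<beta> = 8 and B = "\<lambda>t. t ^ 3 + 3 * t + 8" and B' = "\<lambda>t. 3 * t ^ 2 + 3"]
      sums_ln_closed_form[where s = 192 and a = 363 and b = 156 and c = 48
        and \<alpha> = 63 and A = "\<lambda>t. t + 3" and A' = "\<lambda>_. 1"
        and \<beta> = 64 and B = "\<lambda>t. 64 - 21 * t + 6 * t ^ 2 - t ^ 3" and B' = "\<lambda>t. - 21 + 12 * t - 3 * t ^ 2"])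
    (auto intro!: derivative_eq_intros
      simp: cubic_weight_def algebra_simps power2_eq_square power3_eq_cube ln_div)

end
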